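(* Let $r\in\mathbb{N}$ be odd. For any $n\ge r$, $A>0$ and $\lambda\in[0,1]$, there exists $f\in C^r[-1,1]$, identically $0$ on $[-1,-1/2]$ and nonnegative on $[-1,1]$, such that every algebraic polynomial $P_n$ of degree $\le n$ which is nonnegative on $(\lambda-1/n,\lambda)$ and satisfies $P_n^{(i)}(\lambda)=f^{(i)}(\lambda)$ for $0\le i\le r$ obeys $$\|f-P_n\|>A\,\|f^{(r)}\|.$$
   Context: $\|\cdot\|$ is the sup norm on $[-1,1]$. *)

theory Defs
  imports "HOL-Analysis.Analysis" "HOL-Computational_Algebra.Polynomial"
begin

definition Cr_on :: "nat \<Rightarrow> real set \<Rightarrow> (real \<Rightarrow> real) \<Rightarrow> (nat \<Rightarrow> real \<Rightarrow> real) \<Rightarrow> bool" where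
  "Cr_on r S f D \<longleftrightarrow>
     (\<forall>x\<in>S. D 0 x = f x) \<and>
     (\<forall>i<r. \<forall>x\<in>S. (D i has_real_derivative D (Suc i) x) (at x within S)) \<and>
     continuous_on S (D r)"

definition supnorm :: "(real \<Rightarrow> real) \<Rightarrow> real" where
  "supnorm g = (SUP x\<in>{-1..1}. \<bar>g x\<bar>)"

end

(*
  The function is the spline f(x) = (x - a)_+^(r+1) - (x - lam)_+^(r+1) with a = lam - h: it
  vanishes left of a, and its r-th derivative is the ramp (r+1)! ((x - a)_+ - (x - lam)_+), so
  that ||f^(r)|| <= (r+1)! h.  If P has the r-jet of f at lam, then Taylor's formula at a,
  the binomial theorem and the evenness of r+1 give
    P(a) = h^(r+1) (P^(r+1)(t) / (r+1)! - 1)   for some t in (a, lam),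
  so P(a) >= 0 forces P^(r+1)(t) >= (r+1)!.  On the other hand f = 0 on [-1,-1/2], so
  |P| <= ||f - P|| at n+1 nodes there, and Lagrange interpolation bounds P^(r+1) on [-1,1]
  by K ||f - P|| with K depending only on n and r.  Hence ||f - P|| >= (r+1)!/K, which exceeds
  A ||f^(r)|| as soon as h < 1/(2 A K).
*)
theory Submission
  imports Defs
begin

definition lagrange_basis :: "'a::field set \<Rightarrow> 'a \<Rightarrow> 'a poly" where
  "lagrange_basis T t = smult (1 / (\<Prod>s\<in>T - {t}. t - s)) (\<Prod>s\<in>T - {t}. [:- s, 1:])"

lemma poly_lagrange_basis:
  assumes "finite T" "s \<in> T" "t \<in> T"
  shows "poly (lagrange_basis T t) s = (if s = t then 1 else 0)"
proof (cases "s = t")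
  case True
  have "(\<Prod>u\<in>T - {t}. t - u) \<noteq> 0"
    using assms(1) by simp
  then show ?thesis
    using True by (simp add: lagrange_basis_def poly_prod)
next
  case False
  then have "(\<Prod>u\<in>T - {t}. poly [:- u, 1:] s) = 0"
    using assms by (intro prod_zero bexI[of _ s]) auto
  then show ?thesis
    using False by (simp add: lagrange_basis_def poly_prod)
qed

lemma degree_lagrange_basis:
  assumes "finite T" "t \<in> T"
  shows "degree (lagrange_basis T t) < card T"
proof -
  have "degree (lagrange_basis T t) \<le> degree (\<Prod>s\<in>T - {t}. [:- s, 1:])"
    unfolding lagrange_basis_def by (rule degree_smult_le)
  also have "\<dots> \<le> card (T - {t})"
    using degree_prod_sum_le[of "T - {t}" "\<lambda>s. [:- s, 1:]"] assms(1) by simp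
  also have "\<dots> < card T"
    using assms by (meson card_Diff1_less)
  finally show ?thesis .
qed

lemma lagrange_interpolation:
  fixes P :: "'a::field poly"
  assumes "finite T" "degree P < card T"
  shows "P = (\<Sum>t\<in>T. smult (poly P t) (lagrange_basis T t))"
proof (rule poly_eqI_degree[of T])
  fix s assume "s \<in> T"
  then show "poly P s = poly (\<Sum>t\<in>T. smult (poly P t) (lagrange_basis T t)) s"
    using assms(1) by (simp add: poly_sum poly_lagrange_basis if_distrib[of "(*) _"] cong: if_cong)
next
  have "degree (smult (poly P t) (lagrange_basis T t)) \<le> card T - 1" if "t \<in> T" for t
    using le_less_trans[OF degree_smult_le[of "poly P t"] degree_lagrange_basis[OF assms(1) that]] by linarith
  then have "degree (\<Sum>t\<in>T. smult (poly P t) (lagrange_basis T t)) \<le> card T - 1"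
    by (intro degree_sum_le assms(1)) auto
  then show "degree (\<Sum>t\<in>T. smult (poly P t) (lagrange_basis T t)) < card T"
    using assms(2) by linarith
qed (use assms in auto)

lemma higher_pderiv_bounded_by_values:
  fixes T S :: "real set"
  assumes "finite T" "compact S"
  obtains K where "K > 0"
    "\<And>P M x. degree P < card T \<Longrightarrow> (\<And>t. t \<in> T \<Longrightarrow> \<bar>poly P t\<bar> \<le> M) \<Longrightarrow> x \<in> S \<Longrightarrow>
       \<bar>poly ((pderiv ^^ m) P) x\<bar> \<le> K * M"
proof -
  define B where "B x = (\<Sum>t\<in>T. \<bar>poly ((pderiv ^^ m) (lagrange_basis T t)) x\<bar>)" for x
  have "bounded (B ` S)"
    unfolding B_def by (intro compact_imp_bounded compact_continuous_image assms continuous_intros)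
  then obtain K where "K > 0" and K: "\<And>x. x \<in> S \<Longrightarrow> B x \<le> K"
    unfolding bounded_pos by force
  show thesis
  proof (rule that[OF \<open>K > 0\<close>])
    fix P M x
    assume deg: "degree P < card T" and M: "\<And>t. t \<in> T \<Longrightarrow> \<bar>poly P t\<bar> \<le> M" and "x \<in> S"
    have "M \<ge> 0"
      using deg M by (metis abs_ge_zero all_not_in_conv card.empty not_less0 order.trans)
    have "(pderiv ^^ m) P = (\<Sum>t\<in>T. smult (poly P t) ((pderiv ^^ m) (lagrange_basis T t)))"
      by (subst lagrange_interpolation[OF assms(1) deg]) (simp add: higher_pderiv_sum higher_pderiv_smult)
    then have "\<bar>poly ((pderiv ^^ m) P) x\<bar> = \<bar>\<Sum>t\<in>T. poly P t * poly ((pderiv ^^ m) (lagrange_basis T t)) x\<bar>"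
      by (simp add: poly_sum)
    also have "\<dots> \<le> (\<Sum>t\<in>T. \<bar>poly P t\<bar> * \<bar>poly ((pderiv ^^ m) (lagrange_basis T t)) x\<bar>)"
      by (metis (no_types, lifting) abs_mult sum.cong sum_abs)
    also have "\<dots> \<le> M * B x"
      unfolding B_def sum_distrib_left by (intro sum_mono mult_right_mono M) auto
    also have "\<dots> \<le> K * M"
      using K[OF \<open>x \<in> S\<close>] \<open>M \<ge> 0\<close> by (metis mult.commute mult_left_mono)
    finally show "\<bar>poly ((pderiv ^^ m) P) x\<bar> \<le> K * M" .
  qed
qed

lemma abs_le_supnorm:
  assumes "continuous_on {-1..1} g" "x \<in> {-1..1}"
  shows "\<bar>g x\<bar> \<le> supnorm g"
proof -
  have "bounded ((\<lambda>x. \<bar>g x\<bar>) ` {-1..1})"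
    by (intro compact_imp_bounded compact_continuous_image continuous_intros assms(1)) auto
  then show ?thesis
    unfolding supnorm_def using assms(2) by (intro cSUP_upper bounded_imp_bdd_above)
qed

lemma supnorm_le:
  assumes "\<And>x. x \<in> {-1..1} \<Longrightarrow> \<bar>g x\<bar> \<le> B"
  shows "supnorm g \<le> B"
  unfolding supnorm_def using assms by (intro cSUP_least) auto

definition trunc_pow :: "real \<Rightarrow> nat \<Rightarrow> real \<Rightarrow> real" where
  "trunc_pow c k x = (max 0 (x - c)) ^ k"

lemma has_real_derivative_trunc_pow:
  assumes "1 < k"
  shows "(trunc_pow c k has_real_derivative real k * trunc_pow c (k - 1) x) (at x)"
proof -
  consider "c < x" | "x < c" | "x = c" by linarith
  then show ?thesis
  proof cases
    case 1
    have "\<forall>\<^sub>F y in nhds x. (y - c) ^ k = trunc_pow c k y"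
      using eventually_nhds_in_open[of "{c<..}" x] 1 by (auto simp: trunc_pow_def elim!: eventually_mono)
    moreover have "((\<lambda>y. (y - c) ^ k) has_real_derivative real k * trunc_pow c (k - 1) x) (at x)"
      using 1 by (auto intro!: derivative_eq_intros simp: trunc_pow_def)
    ultimately show ?thesis
      by (rule DERIV_cong_ev[OF refl _ refl, THEN iffD1])
  next
    case 2
    have "\<forall>\<^sub>F y in nhds x. 0 = trunc_pow c k y"
      using eventually_nhds_in_open[of "{..<c}" x] 2 assms
      by (auto simp: trunc_pow_def elim!: eventually_mono)
    moreover have "((\<lambda>y. 0) has_real_derivative real k * trunc_pow c (k - 1) x) (at x)"
      using 2 assms by (simp add: trunc_pow_def power_0_left)
    ultimately show ?thesis
      by (rule DERIV_cong_ev[OF refl _ refl, THEN iffD1])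
  next
    case 3
    have "((\<lambda>y. \<bar>y - c\<bar> ^ (k - 1)) \<longlongrightarrow> \<bar>c - c\<bar> ^ (k - 1)) (at c)"
      by (intro tendsto_intros)
    moreover have "\<bar>c - c\<bar> ^ (k - 1) = (0::real)"
      using assms by simp
    ultimately have "((\<lambda>y. \<bar>y - c\<bar> ^ (k - 1)) \<longlongrightarrow> 0) (at c)"
      by (simp only:)
    then have "((\<lambda>y. (trunc_pow c k y - trunc_pow c k c) / (y - c)) \<longlongrightarrow> 0) (at c)"
    proof (rule Lim_null_comparison[rotated], intro always_eventually allI)
      fix y
      have "\<bar>trunc_pow c k y\<bar> \<le> \<bar>y - c\<bar> ^ k"
        unfolding trunc_pow_def power_abs by (intro power_mono) auto
      also have "\<dots> = \<bar>y - c\<bar> * \<bar>y - c\<bar> ^ (k - 1)"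
        using assms by (simp add: power_eq_if)
      finally have "\<bar>trunc_pow c k y\<bar> \<le> \<bar>y - c\<bar> * \<bar>y - c\<bar> ^ (k - 1)" .
      moreover have "trunc_pow c k c = 0"
        using assms by (simp add: trunc_pow_def)
      ultimately show "norm ((trunc_pow c k y - trunc_pow c k c) / (y - c)) \<le> \<bar>y - c\<bar> ^ (k - 1)"
        by (cases "y = c") (auto simp: abs_divide divide_le_eq mult.commute)
    qed
    moreover have "real k * trunc_pow c (k - 1) c = 0"
      using assms by (simp add: trunc_pow_def power_0_left)
    ultimately show ?thesis
      using 3 by (simp only: has_field_derivative_iff)
  qed
qed

lemma has_real_derivative_scaled_trunc_pow:
  assumes "Suc i < k"
  shows "((\<lambda>x. fact k / fact (k - i) * trunc_pow c (k - i) x) has_real_derivative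
           fact k / fact (k - Suc i) * trunc_pow c (k - Suc i) x) (at x)"
proof -
  have "k - i = Suc (k - Suc i)"
    using assms by simp
  then have "fact k / fact (k - i) * real (k - i) = (fact k / fact (k - Suc i) :: real)"
    by (simp del: of_nat_Suc)
  moreover have "k - i - 1 = k - Suc i"
    by simp
  ultimately show ?thesis
    using DERIV_cmult[OF has_real_derivative_trunc_pow[of "k - i" c x], of "fact k / fact (k - i)"] assms
    by (simp add: mult.assoc[symmetric])
qed

(* For i < k, the i-th derivative of the spline (x - a)_+^k - (x - b)_+^k. *)
definition spline_deriv :: "nat \<Rightarrow> real \<Rightarrow> real \<Rightarrow> nat \<Rightarrow> real \<Rightarrow> real" where
  "spline_deriv k a b i x = fact k / fact (k - i) * (trunc_pow a (k - i) x - trunc_pow b (k - i) x)"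

lemma has_real_derivative_spline_deriv:
  assumes "Suc i < k"
  shows "(spline_deriv k a b i has_real_derivative spline_deriv k a b (Suc i) x) (at x)"
  using DERIV_diff[OF has_real_derivative_scaled_trunc_pow[OF assms, of a x]
                      has_real_derivative_scaled_trunc_pow[OF assms, of b x]]
  unfolding spline_deriv_def right_diff_distrib by (simp only: fun_diff_def)

lemma continuous_on_spline_deriv: "continuous_on S (spline_deriv k a b i)"
  unfolding spline_deriv_def trunc_pow_def by (intro continuous_intros)

lemma Cr_on_spline: "Cr_on r S (spline_deriv (Suc r) a b 0) (spline_deriv (Suc r) a b)"
  unfolding Cr_on_def
  by (simp add: continuous_on_spline_deriv has_field_derivative_at_within has_real_derivative_spline_deriv)

lemma spline_deriv_eq_0:
  assumes "a \<le> b" "x \<le> a"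
  shows "spline_deriv k a b i x = 0"
proof -
  have "max 0 (x - a) = 0" "max 0 (x - b) = 0"
    using assms by auto
  then show ?thesis
    by (simp add: spline_deriv_def trunc_pow_def)
qed

lemma spline_deriv_nonneg:
  assumes "a \<le> b"
  shows "0 \<le> spline_deriv k a b i x"
proof -
  have "trunc_pow b (k - i) x \<le> trunc_pow a (k - i) x"
    unfolding trunc_pow_def using assms by (intro power_mono) auto
  then show ?thesis
    unfolding spline_deriv_def by simp
qed

lemma abs_spline_deriv_le:
  assumes "a \<le> b"
  shows "\<bar>spline_deriv (Suc r) a b r x\<bar> \<le> fact (Suc r) * (b - a)"
proof -
  have "\<bar>max 0 (x - a) - max 0 (x - b)\<bar> \<le> b - a"
    using assms by (auto simp: max_def)
  then show ?thesis
    by (simp add: spline_deriv_def trunc_pow_def Suc_diff_le abs_mult)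
qed

lemma spline_deriv_at_right_end:
  assumes "a \<le> b" "i < k"
  shows "spline_deriv k a b i b = fact k / fact (k - i) * (b - a) ^ (k - i)"
  using assms by (simp add: spline_deriv_def trunc_pow_def)

lemma spline_taylor_sum:
  assumes "a \<le> b" "0 < k"
  shows "(\<Sum>i<k. spline_deriv k a b i b / fact i * (a - b) ^ i) = - ((a - b) ^ k)"
proof -
  have "(\<Sum>i<k. spline_deriv k a b i b / fact i * (a - b) ^ i)
      = (\<Sum>i<k. of_nat (k choose i) * (a - b) ^ i * (b - a) ^ (k - i))"
    using assms(1) by (intro sum.cong) (auto simp: spline_deriv_at_right_end binomial_fact mult_ac)
  also have "\<dots> = ((a - b) + (b - a)) ^ k - (a - b) ^ k"
    unfolding binomial_ring by (simp add: lessThan_Suc_atMost[symmetric])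
  also have "\<dots> = - ((a - b) ^ k)"
    using assms(2) by simp
  finally show ?thesis .
qed

lemma matching_spline_jet_forces_large_derivative:
  fixes P :: "real poly"
  assumes "even k" "0 < k" "a < b" "0 \<le> poly P a"
    and jet: "\<And>i. i < k \<Longrightarrow> poly ((pderiv ^^ i) P) b = spline_deriv k a b i b"
  obtains t where "a < t" "t < b" "fact k \<le> poly ((pderiv ^^ k) P) t"
proof -
  obtain t where t: "a < t" "t < b" and taylor:
    "poly P a = (\<Sum>i<k. poly ((pderiv ^^ i) P) b / fact i * (a - b) ^ i)
                + poly ((pderiv ^^ k) P) t / fact k * (a - b) ^ k"
    using Taylor_down[of k "\<lambda>i. poly ((pderiv ^^ i) P)" "poly P" a b b] assms(2,3) by auto
  moreover have "(\<Sum>i<k. poly ((pderiv ^^ i) P) b / fact i * (a - b) ^ i) = - ((a - b) ^ k)"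
    using jet spline_taylor_sum[of a b k] assms(2,3) by simp
  ultimately have "poly P a = (a - b) ^ k * (poly ((pderiv ^^ k) P) t / fact k - 1)"
    by (simp add: algebra_simps)
  moreover have "(a - b) ^ k > 0"
    using assms(1,3) by (simp add: zero_less_power_eq)
  ultimately have "poly ((pderiv ^^ k) P) t / fact k \<ge> 1"
    using assms(4) by (simp add: zero_le_mult_iff)
  then show thesis
    using that t by (simp add: divide_le_eq)
qed

lemma spline_approximation_error_lower_bound:
  fixes n k :: nat
  assumes "even k" "0 < k"
  obtains K where "K > 0"
    "\<And>a b P. -1/2 \<le> a \<Longrightarrow> a < b \<Longrightarrow> b \<le> 1 \<Longrightarrow> degree P \<le> n \<Longrightarrow> 0 \<le> poly P a \<Longrightarrow>
       (\<And>i. i < k \<Longrightarrow> poly ((pderiv ^^ i) P) b = spline_deriv k a b i b) \<Longrightarrow>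
       fact k \<le> K * supnorm (\<lambda>x. spline_deriv k a b 0 x - poly P x)"
proof -
  obtain T :: "real set" where T: "finite T" "card T = Suc n" "T \<subseteq> {-1..-1/2}"
    using infinite_arbitrarily_large[of "{-1..-1/2::real}" "Suc n"] by auto
  obtain K where "K > 0" and K: "\<And>P M x. degree P < card T \<Longrightarrow> (\<And>t. t \<in> T \<Longrightarrow> \<bar>poly P t\<bar> \<le> M) \<Longrightarrow>
      x \<in> {-1..1} \<Longrightarrow> \<bar>poly ((pderiv ^^ k) P) x\<bar> \<le> K * M"
    using higher_pderiv_bounded_by_values[OF T(1) compact_Icc, where m = k] by metis
  show thesis
  proof (rule that[OF \<open>K > 0\<close>])
    fix a b :: real and P :: "real poly"
    assume a: "-1/2 \<le> a" "a < b" "b \<le> 1" and deg: "degree P \<le> n" and "0 \<le> poly P a"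
      and jet: "\<And>i. i < k \<Longrightarrow> poly ((pderiv ^^ i) P) b = spline_deriv k a b i b"
    define E where "E = supnorm (\<lambda>x. spline_deriv k a b 0 x - poly P x)"
    obtain t where t: "a < t" "t < b" and large: "fact k \<le> poly ((pderiv ^^ k) P) t"
      using matching_spline_jet_forces_large_derivative[OF assms a(2) \<open>0 \<le> poly P a\<close> jet] by blast
    have "\<bar>poly P s\<bar> \<le> E" if "s \<in> T" for s
    proof -
      have s: "s \<in> {-1..1}" "s \<le> a"
        using T(3) that a(1) by auto
      then have "\<bar>poly P s\<bar> = \<bar>spline_deriv k a b 0 s - poly P s\<bar>"
        using spline_deriv_eq_0[of a b s] a(2) by simp
      also have "\<dots> \<le> E"
        unfolding E_def using s(1) by (intro abs_le_supnorm continuous_intros continuous_on_spline_deriv)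
      finally show ?thesis .
    qed
    then have "\<bar>poly ((pderiv ^^ k) P) t\<bar> \<le> K * E"
      using K deg T(2) t a by auto
    with large show "fact k \<le> K * E"
      by linarith
  qed
qed


lemma spline_approximation_error_exceeds:
  fixes n r :: nat and A :: real
  assumes "odd r" "A > 0"
  obtains \<delta> where "\<delta> > 0"
    "\<And>a b P. -1/2 \<le> a \<Longrightarrow> a < b \<Longrightarrow> b \<le> 1 \<Longrightarrow> b - a \<le> \<delta> \<Longrightarrow> degree P \<le> n \<Longrightarrow> 0 \<le> poly P a \<Longrightarrow>
       (\<And>i. i \<le> r \<Longrightarrow> poly ((pderiv ^^ i) P) b = spline_deriv (Suc r) a b i b) \<Longrightarrow>
       A * supnorm (spline_deriv (Suc r) a b r) < supnorm (\<lambda>x. spline_deriv (Suc r) a b 0 x - poly P x)"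
proof -
  obtain K where "K > 0" and K: "\<And>a b P. -1/2 \<le> a \<Longrightarrow> a < b \<Longrightarrow> b \<le> 1 \<Longrightarrow> degree P \<le> n \<Longrightarrow>
      0 \<le> poly P a \<Longrightarrow> (\<And>i. i < Suc r \<Longrightarrow> poly ((pderiv ^^ i) P) b = spline_deriv (Suc r) a b i b) \<Longrightarrow>
      fact (Suc r) \<le> K * supnorm (\<lambda>x. spline_deriv (Suc r) a b 0 x - poly P x)"
    using spline_approximation_error_lower_bound[of "Suc r" n] assms(1) by auto
  show thesis
  proof (rule that[of "1 / (2 * A * K)"])
    show "1 / (2 * A * K) > 0"
      using \<open>K > 0\<close> assms(2) by simp
    fix a b :: real and P :: "real poly"
    assume ab: "-1/2 \<le> a" "a < b" "b \<le> 1" "b - a \<le> 1 / (2 * A * K)"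
      and "degree P \<le> n" "0 \<le> poly P a"
      and "\<And>i. i \<le> r \<Longrightarrow> poly ((pderiv ^^ i) P) b = spline_deriv (Suc r) a b i b"
    then have error: "fact (Suc r) \<le> K * supnorm (\<lambda>x. spline_deriv (Suc r) a b 0 x - poly P x)"
      by (intro K) (auto simp: less_Suc_eq_le)
    have small: "A * K * (b - a) \<le> 1/2"
      using ab(4) \<open>K > 0\<close> assms(2) by (simp add: field_simps)
    have "supnorm (spline_deriv (Suc r) a b r) \<le> fact (Suc r) * (b - a)"
      using abs_spline_deriv_le[of a b r] ab(2) by (intro supnorm_le) simp
    then have "K * (A * supnorm (spline_deriv (Suc r) a b r)) \<le> fact (Suc r) * (A * K * (b - a))"
      using mult_left_mono[of _ _ "K * A"] \<open>K > 0\<close> assms(2) by (simp add: mult_ac)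
    also have "\<dots> \<le> fact (Suc r) / 2"
      using mult_left_mono[OF small, of "fact (Suc r)"] by simp
    also have "\<dots> < fact (Suc r)"
      by simp
    also note error
    finally show "A * supnorm (spline_deriv (Suc r) a b r)
        < supnorm (\<lambda>x. spline_deriv (Suc r) a b 0 x - poly P x)"
      using \<open>K > 0\<close> by simp
  qed
qed

theorem lemma3p9:
  fixes r n :: nat and A lam :: real
  assumes "odd r" and "n \<ge> r" and "A > 0" and "lam \<in> {0..1}"
  shows "\<exists>f D. Cr_on r {-1..1} f D \<and>
           (\<forall>x\<in>{-1..-1/2}. f x = 0) \<and>
           (\<forall>x\<in>{-1..1}. f x \<ge> 0) \<and>
           (\<forall>P :: real poly.
              degree P \<le> n \<longrightarrow>
              (\<forall>x\<in>{lam - 1 / real n<..<lam}. poly P x \<ge> 0) \<longrightarrow>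
              (\<forall>i\<le>r. poly ((pderiv ^^ i) P) lam = D i lam) \<longrightarrow>
              supnorm (\<lambda>x. f x - poly P x) > A * supnorm (D r))"
proof -
  obtain \<delta> where "\<delta> > 0" and \<delta>: "\<And>a b P. -1/2 \<le> a \<Longrightarrow> a < b \<Longrightarrow> b \<le> 1 \<Longrightarrow> b - a \<le> \<delta> \<Longrightarrow>
      degree P \<le> n \<Longrightarrow> 0 \<le> poly P a \<Longrightarrow>
      (\<And>i. i \<le> r \<Longrightarrow> poly ((pderiv ^^ i) P) b = spline_deriv (Suc r) a b i b) \<Longrightarrow>
      A * supnorm (spline_deriv (Suc r) a b r) < supnorm (\<lambda>x. spline_deriv (Suc r) a b 0 x - poly P x)"
    using spline_approximation_error_exceeds[OF assms(1,3), where n = n] by blast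
  have "1 \<le> real n"
    using assms(1,2) by (cases r) auto
  then have "1 / (2 * real n) < 1 / real n" "1 / (2 * real n) \<le> 1/2"
    by (simp_all add: field_simps)
  define h where "h = min (1 / (2 * real n)) \<delta>"
  have "0 < h" "h \<le> \<delta>" "h \<le> 1 / (2 * real n)"
    using \<open>\<delta> > 0\<close> \<open>1 \<le> real n\<close> by (auto simp: h_def)
  moreover have "0 \<le> lam" "lam \<le> 1"
    using assms(4) by auto
  moreover define a where "a = lam - h"
  ultimately have a: "-1/2 \<le> a" "a < lam" "lam - 1 / real n < a" "lam - a \<le> \<delta>" "lam \<le> 1"
    using \<open>1 / (2 * real n) < 1 / real n\<close> \<open>1 / (2 * real n) \<le> 1/2\<close> by linarith+
  show ?thesis
  proof (intro exI conjI allI impI ballI)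
    fix P :: "real poly"
    assume "degree P \<le> n" and nonneg: "\<forall>x\<in>{lam - 1 / real n<..<lam}. poly P x \<ge> 0"
      and jet: "\<forall>i\<le>r. poly ((pderiv ^^ i) P) lam = spline_deriv (Suc r) a lam i lam"
    have "0 \<le> poly P a"
      using nonneg a(2,3) by simp
    with jet show "A * supnorm (spline_deriv (Suc r) a lam r)
        < supnorm (\<lambda>x. spline_deriv (Suc r) a lam 0 x - poly P x)"
      using \<delta>[OF a(1,2,5,4) \<open>degree P \<le> n\<close>] by blast
  qed (use a(1,2) in \<open>auto intro: Cr_on_spline spline_deriv_eq_0 spline_deriv_nonneg\<close>)
qed

end
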